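(* Let $A\in\mathbb{R}^{n\times n}$, $B\in\mathbb{R}^{n\times r}$, $j_{\max}\ge1$, $0<\varepsilon<1$, and shifts $\alpha_1,\ldots,\alpha_{j_{\max}}\in\mathbb{C}$ with $\mathrm{Re}(\alpha_j)<0$, $A+\alpha_jI$ nonsingular, and $\|\mathcal{C}_j\|<1$ for $j=1,\ldots,j_{\max}$. Run the inexact LR-ADI iteration (with $M=I$) of the context, and suppose that for all $1\le k\le j_{\max}$ $$\|s_k\|\le\tfrac12\Big(\sqrt{\|w_{k-1}\|^2+\tfrac{2\varepsilon}{\sigma_k\gamma_k^2j_{\max}}}-\|w_{k-1}\|\Big),\qquad \sigma_k:=\|(A+\alpha_kI)^{-1}\|.$$ Then $\|\mathcal{R}^{\mathrm{true}}_{j_{\max}}\|\le\|\mathcal{R}^{\mathrm{exact}}_{j_{\max}}\|+2\varepsilon$.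
   Context: $\mathcal{C}_k:=(A+\alpha_kI)^{-1}(A-\overline{\alpha_k}I)$. Inexact LR-ADI iteration: $w_0:=B$, $\gamma_k:=\sqrt{-2\,\mathrm{Re}(\alpha_k)}$; $v_k$ arbitrary with $s_k:=w_{k-1}-(A+\alpha_kI)v_k$, $w_k:=w_{k-1}+\gamma_k^2v_k$, $Z_k:=[\gamma_1v_1,\ldots,\gamma_kv_k]$. True residual $\mathcal{R}^{\mathrm{true}}_k:=AZ_kZ_k^*+Z_kZ_k^*A^*+BB^*$. Exact LR-ADI residual (all $s_k=0$, same shifts): $\mathcal{R}^{\mathrm{exact}}_k:=w^{\mathrm{exact}}_k(w^{\mathrm{exact}}_k)^*$ with $w^{\mathrm{exact}}_k:=\mathcal{C}_k\cdots\mathcal{C}_1B$. Norms are spectral. *)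

theory Defs
  imports "HOL-Analysis.Analysis"
begin

definition cmat :: "real^'c^'m \<Rightarrow> complex^'c^'m" where
  "cmat M = (\<chi> i j. complex_of_real (M $ i $ j))"

definition cadj :: "complex^'c^'m \<Rightarrow> complex^'m^'c" where
  "cadj M = (\<chi> i j. cnj (M $ j $ i))"

definition spnorm :: "complex^'c^'m \<Rightarrow> real" where
  "spnorm M = onorm (\<lambda>x::complex^'c. M *v x)"

definition cayley :: "real^'n^'n \<Rightarrow> complex \<Rightarrow> complex^'n^'n" where
  "cayley A a = matrix_inv (cmat A + mat a) ** (cmat A - mat (cnj a))"

definition gsq :: "complex \<Rightarrow> real" where
  "gsq a = - 2 * Re a"

text \<open>Inexact LR-ADI: w_0 = B, w_k = w_{k-1} + gamma_k^2 v_k (shifts/iterates indexed from 1).\<close>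
fun adi_w :: "real^'r^'n \<Rightarrow> (nat \<Rightarrow> complex) \<Rightarrow> (nat \<Rightarrow> complex^'r^'n) \<Rightarrow> nat \<Rightarrow> complex^'r^'n" where
  "adi_w B al v 0 = cmat B"
| "adi_w B al v (Suc k) = adi_w B al v k + gsq (al (Suc k)) *\<^sub>R v (Suc k)"

definition adi_s :: "real^'n^'n \<Rightarrow> real^'r^'n \<Rightarrow> (nat \<Rightarrow> complex) \<Rightarrow> (nat \<Rightarrow> complex^'r^'n) \<Rightarrow> nat \<Rightarrow> complex^'r^'n" where
  "adi_s A B al v k = adi_w B al v (k - 1) - (cmat A + mat (al k)) ** v k"

text \<open>Z_k Z_k^* with Z_k = [gamma_1 v_1, ..., gamma_k v_k]; since gamma_i is real,
  Z_k Z_k^* = sum_{i=1}^k gamma_i^2 v_i v_i^*.\<close>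
definition adi_ZZ :: "(nat \<Rightarrow> complex) \<Rightarrow> (nat \<Rightarrow> complex^'r^'n) \<Rightarrow> nat \<Rightarrow> complex^'n^'n" where
  "adi_ZZ al v k = (\<Sum>i=1..k. gsq (al i) *\<^sub>R (v i ** cadj (v i)))"

definition res_true :: "real^'n^'n \<Rightarrow> real^'r^'n \<Rightarrow> (nat \<Rightarrow> complex) \<Rightarrow> (nat \<Rightarrow> complex^'r^'n) \<Rightarrow> nat \<Rightarrow> complex^'n^'n" where
  "res_true A B al v k = cmat A ** adi_ZZ al v k + adi_ZZ al v k ** cadj (cmat A) + cmat B ** cadj (cmat B)"

fun w_exact :: "real^'n^'n \<Rightarrow> real^'r^'n \<Rightarrow> (nat \<Rightarrow> complex) \<Rightarrow> nat \<Rightarrow> complex^'r^'n" where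
  "w_exact A B al 0 = cmat B"
| "w_exact A B al (Suc k) = cayley A (al (Suc k)) ** w_exact A B al k"

definition res_exact :: "real^'n^'n \<Rightarrow> real^'r^'n \<Rightarrow> (nat \<Rightarrow> complex) \<Rightarrow> nat \<Rightarrow> complex^'n^'n" where
  "res_exact A B al k = w_exact A B al k ** cadj (w_exact A B al k)"

end

theory Submission
  imports Defs
begin

text \<open>
  Solving the shifted system only up to the residual s_k gives
  v_k = (A + alpha_k I)^-1 (w_(k-1) - s_k), so one inexact step is the exact Cayley step
  plus a perturbation: w_k = C_k w_(k-1) - gamma_k^2 (A + alpha_k I)^-1 s_k.
  The true residual differs from w_k w_k^* by sum_i gamma_i^2 (s_i v_i^* + v_i s_i^*),
  and since the C_k are contractions, each perturbation, propagated through the remaining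
  Cayley steps, increases the squared norm of the final iterate only by
  gamma_k^2 sigma_k |s_k| (2 |w_(k-1)| + 2 |s_k|), using gamma_k^2 sigma_k = |C_k - I| <= 2.
  Both error sources are thus bounded by the same per-step quantity, and the tolerance on |s_k|
  is exactly what makes it at most eps / j_max.
\<close>

lemma spnorm_nonneg: "0 \<le> spnorm M"
  unfolding spnorm_def by (rule onorm_pos_le) simp

lemma norm_matrix_vector_mult_le: "norm (M *v x) \<le> spnorm M * norm x"
  unfolding spnorm_def by (rule onorm) simp

lemma spnorm_le: "0 \<le> b \<Longrightarrow> (\<And>x. norm (M *v x) \<le> b * norm x) \<Longrightarrow> spnorm M \<le> b"
  unfolding spnorm_def by (rule onorm_bound)

lemma spnorm_zero [simp]: "spnorm (0 :: complex^'c^'m) = 0"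
  by (simp add: spnorm_def onorm_zero)

lemma spnorm_mat_1_le: "spnorm (mat 1 :: complex^'n^'n) \<le> 1"
  by (rule spnorm_le) auto

lemma spnorm_mult_le: "spnorm (M ** N) \<le> spnorm M * spnorm N"
proof -
  have "(\<lambda>x. (M ** N) *v x) = (\<lambda>x. M *v x) \<circ> (\<lambda>x. N *v x)"
    by (simp add: fun_eq_iff matrix_vector_mul_assoc)
  then show ?thesis
    unfolding spnorm_def by (simp add: onorm_compose)
qed

lemma spnorm_add_le: "spnorm (M + N) \<le> spnorm M + spnorm N"
  unfolding spnorm_def matrix_vector_mult_add_rdistrib by (rule onorm_triangle) simp_all

lemma spnorm_uminus [simp]: "spnorm (- M) = spnorm M"
proof -
  have "(\<lambda>x. (- M) *v x) = (\<lambda>x. - (M *v x))"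
    by (simp add: fun_eq_iff vec_eq_iff matrix_vector_mult_def sum_negf)
  then show ?thesis
    unfolding spnorm_def by (simp add: onorm_neg)
qed

lemma spnorm_diff_le: "spnorm (M - N) \<le> spnorm M + spnorm N"
  using spnorm_add_le[of M "- N"] by simp

lemma spnorm_scaleR: "spnorm (c *\<^sub>R M) = \<bar>c\<bar> * spnorm M"
proof -
  have "(\<lambda>x. (c *\<^sub>R M) *v x) = (\<lambda>x. c *\<^sub>R (M *v x))"
    by (simp add: fun_eq_iff vec_eq_iff matrix_vector_mult_def scaleR_sum_right)
  then show ?thesis
    unfolding spnorm_def by (simp add: onorm_scaleR)
qed

lemma spnorm_sum_le:
  "finite I \<Longrightarrow> spnorm (\<Sum>i\<in>I. M i :: complex^'c^'m) \<le> (\<Sum>i\<in>I. spnorm (M i))"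
proof (induction I rule: finite_induct)
  case (insert i I)
  then show ?case
    using spnorm_add_le[of "M i" "sum M I"] by simp
qed simp

lemma matrix_add_rdistrib: "(A + B) ** C = A ** C + B ** C"
  by (simp add: matrix_matrix_mult_def vec_eq_iff sum.distrib distrib_right)

lemma matrix_diff_ldistrib: "(A :: 'a::ring_1^'n^'m) ** (B - C) = A ** B - A ** C"
  by (simp add: matrix_matrix_mult_def vec_eq_iff sum_subtractf right_diff_distrib)

lemma matrix_inv_mul: "invertible M \<Longrightarrow> matrix_inv M ** M = mat 1"
  unfolding invertible_def matrix_inv_def by (rule someI2_ex) auto

lemma cadj_cadj [simp]: "cadj (cadj M) = M"
  by (simp add: cadj_def vec_eq_iff)

lemma cadj_add: "cadj (M + N) = cadj M + cadj N"
  by (simp add: cadj_def vec_eq_iff)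

lemma cadj_scaleR: "cadj (c *\<^sub>R M) = c *\<^sub>R cadj M"
  by (simp add: cadj_def vec_eq_iff)

lemma cadj_matrix_mul: "cadj (M ** N) = cadj N ** cadj M"
  by (simp add: cadj_def vec_eq_iff matrix_matrix_mult_def mult.commute)

lemma cadj_mat: "cadj (mat a) = mat (cnj a)"
  by (simp add: cadj_def vec_eq_iff mat_def)

lemma inner_complex_eq_Re_mult_cnj: "inner a b = Re (a * cnj b)"
  by (simp add: inner_complex_def)

lemma inner_matrix_vector_mult_cadj: "inner (M *v x) y = inner x (cadj M *v y)"
proof -
  have "inner (M *v x) y = Re (\<Sum>i\<in>UNIV. \<Sum>j\<in>UNIV. M$i$j * x$j * cnj (y$i))"
    by (simp add: inner_vec_def inner_complex_eq_Re_mult_cnj matrix_vector_mult_def sum_distrib_right Re_sum)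
  also have "\<dots> = Re (\<Sum>j\<in>UNIV. \<Sum>i\<in>UNIV. M$i$j * x$j * cnj (y$i))"
    by (subst sum.swap) simp
  also have "\<dots> = inner x (cadj M *v y)"
    by (simp add: inner_vec_def inner_complex_eq_Re_mult_cnj matrix_vector_mult_def cadj_def
        sum_distrib_left Re_sum mult_ac)
  finally show ?thesis .
qed

lemma spnorm_sq_le_spnorm_cadj_mult: "(spnorm M)\<^sup>2 \<le> spnorm (cadj M ** M)"
proof -
  let ?N = "cadj M ** M"
  have "norm (M *v x) \<le> sqrt (spnorm ?N) * norm x" for x
  proof (rule power2_le_imp_le)
    have "(norm (M *v x))\<^sup>2 = inner x (?N *v x)"
      by (simp add: power2_norm_eq_inner inner_matrix_vector_mult_cadj matrix_vector_mul_assoc)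
    also have "\<dots> \<le> norm x * (spnorm ?N * norm x)"
      using norm_cauchy_schwarz order_trans mult_left_mono norm_matrix_vector_mult_le norm_ge_zero
      by metis
    also have "\<dots> = (sqrt (spnorm ?N) * norm x)\<^sup>2"
      by (simp add: power_mult_distrib spnorm_nonneg power2_eq_square)
    finally show "(norm (M *v x))\<^sup>2 \<le> (sqrt (spnorm ?N) * norm x)\<^sup>2" .
  qed (simp add: spnorm_nonneg)
  then have "spnorm M \<le> sqrt (spnorm ?N)"
    by (intro spnorm_le) (auto simp: spnorm_nonneg)
  then have "(spnorm M)\<^sup>2 \<le> (sqrt (spnorm ?N))\<^sup>2"
    by (rule power_mono) (simp add: spnorm_nonneg)
  then show ?thesis
    by (simp add: spnorm_nonneg)
qed

lemma spnorm_cadj [simp]: "spnorm (cadj M) = spnorm M"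
proof -
  have "spnorm M \<le> spnorm (cadj M)" for M :: "complex^'c^'m"
  proof (cases "spnorm M = 0")
    case False
    then have "0 < spnorm M" using spnorm_nonneg[of M] by linarith
    moreover have "spnorm M * spnorm M \<le> spnorm (cadj M) * spnorm M"
      using spnorm_sq_le_spnorm_cadj_mult[of M] spnorm_mult_le[of "cadj M" M]
      by (simp add: power2_eq_square)
    ultimately show ?thesis by simp
  qed (simp add: spnorm_nonneg)
  from this[of M] this[of "cadj M"] show ?thesis by simp
qed

lemma spnorm_mult_cadj: "spnorm (M ** cadj M) = (spnorm M)\<^sup>2"
proof (rule antisym)
  show "spnorm (M ** cadj M) \<le> (spnorm M)\<^sup>2"
    using spnorm_mult_le[of M "cadj M"] by (simp add: power2_eq_square)
  show "(spnorm M)\<^sup>2 \<le> spnorm (M ** cadj M)"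
    using spnorm_sq_le_spnorm_cadj_mult[of "cadj M"] by simp
qed

lemma perturbed_contraction_product_sq_le:
  fixes x y d :: "nat \<Rightarrow> complex^'r^'n" and C :: "nat \<Rightarrow> complex^'n^'n" and P :: "complex^'n^'p"
  assumes x0: "x 0 = y 0"
    and y_Suc: "\<And>k. k < m \<Longrightarrow> y (Suc k) = C (Suc k) ** y k"
    and x_Suc: "\<And>k. k < m \<Longrightarrow> x (Suc k) = C (Suc k) ** x k + d (Suc k)"
    and C: "\<And>k. k < m \<Longrightarrow> spnorm (C (Suc k)) \<le> 1"
    and d: "\<And>k. k < m \<Longrightarrow> spnorm (d (Suc k)) * (2 * spnorm (x k) + spnorm (d (Suc k))) \<le> \<delta> (Suc k)"
    and P: "spnorm P \<le> 1"
  shows "(spnorm (P ** x m))\<^sup>2 \<le> (spnorm (P ** y m))\<^sup>2 + (\<Sum>k=1..m. \<delta> k)"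
  using y_Suc x_Suc C d P
  \<comment> \<open>\<open>P\<close> plays the role of the product of the contractions still to be applied.\<close>
proof (induction m arbitrary: P)
  case 0
  then show ?case by (simp add: x0)
next
  case (Suc m)
  let ?PC = "P ** C (Suc m)" and ?e = "spnorm (d (Suc m))"
  let ?a = "spnorm (?PC ** x m)"
  have "spnorm ?PC \<le> spnorm P * spnorm (C (Suc m))"
    by (rule spnorm_mult_le)
  also have "\<dots> \<le> 1"
    using Suc.prems(3)[of m] Suc.prems(5) by (simp add: mult_le_one spnorm_nonneg)
  finally have PC: "spnorm ?PC \<le> 1" .
  have a_le: "?a \<le> spnorm (x m)"
    using spnorm_mult_le[of ?PC "x m"] mult_right_mono[OF PC spnorm_nonneg[of "x m"]] by simp
  have "spnorm (P ** x (Suc m)) \<le> ?a + spnorm (P ** d (Suc m))"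
    using spnorm_add_le[of "?PC ** x m"] Suc.prems(2)[of m]
    by (simp add: matrix_add_ldistrib matrix_mul_assoc)
  also have "spnorm (P ** d (Suc m)) \<le> ?e"
    using spnorm_mult_le[of P "d (Suc m)"] mult_right_mono[OF Suc.prems(5) spnorm_nonneg[of "d (Suc m)"]]
    by simp
  finally have "(spnorm (P ** x (Suc m)))\<^sup>2 \<le> (?a + ?e)\<^sup>2"
    by (simp add: power_mono spnorm_nonneg)
  also have "\<dots> = ?a\<^sup>2 + ?e * (2 * ?a + ?e)"
    by (simp add: power2_eq_square algebra_simps)
  also have "?e * (2 * ?a + ?e) \<le> ?e * (2 * spnorm (x m) + ?e)"
    using a_le by (simp add: mult_left_mono spnorm_nonneg)
  also have "\<dots> \<le> \<delta> (Suc m)"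
    using Suc.prems(4)[of m] by simp
  also have "?a\<^sup>2 \<le> (spnorm (P ** y (Suc m)))\<^sup>2 + (\<Sum>k=1..m. \<delta> k)"
    using Suc.IH[OF _ _ _ _ PC] Suc.prems(1-4) by (simp add: matrix_mul_assoc)
  finally show ?case
    by simp
qed

lemma mult_add_le_of_le_half_sqrt_gap:
  fixes t W c :: real
  assumes "0 \<le> t" and "0 \<le> W" and "0 \<le> c" and "t \<le> (sqrt (W\<^sup>2 + c) - W) / 2"
  shows "4 * t * (W + t) \<le> c"
proof -
  have "(2 * t + W)\<^sup>2 \<le> (sqrt (W\<^sup>2 + c))\<^sup>2"
    using assms by (intro power_mono) auto
  then show ?thesis
    using assms(3) by (simp add: power2_eq_square algebra_simps)
qed

lemma mat_mult_add_mult_mat_cnj: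
  "mat a ** (X :: complex^'c^'n) + X ** mat (cnj a) = (- gsq a) *\<^sub>R X"
  by (simp add: matrix_matrix_mult_def mat_def vec_eq_iff gsq_def if_distrib if_distribR
      cong: if_cong) (simp add: complex_eq_iff algebra_simps)

text \<open>The shift terms \<open>\<alpha> v v\<^sup>* + v v\<^sup>* \<alpha>\<^sup>*\<close> equal \<open>-\<gamma>\<^sup>2 v v\<^sup>*\<close> and cancel the \<open>\<gamma>\<^sup>4\<close> term.\<close>

lemma outer_product_step:
  fixes v s w :: "complex^'r^'n" and K :: "complex^'n^'n"
  assumes w: "w = s + (K + mat a) ** v"
  shows "(w + gsq a *\<^sub>R v) ** cadj (w + gsq a *\<^sub>R v)
    = w ** cadj w + gsq a *\<^sub>R (s ** cadj v + v ** cadj s)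
      + gsq a *\<^sub>R (K ** (v ** cadj v) + (v ** cadj v) ** cadj K)"
proof -
  let ?g = "gsq a" and ?P = "v ** cadj v"
  have expand: "(w + ?g *\<^sub>R v) ** cadj (w + ?g *\<^sub>R v)
      = w ** cadj w + ?g *\<^sub>R (w ** cadj v + v ** cadj w) + (?g * ?g) *\<^sub>R ?P"
    by (simp add: cadj_add cadj_scaleR matrix_add_rdistrib matrix_add_ldistrib
        scalar_matrix_assoc[symmetric] matrix_scalar_ac algebra_simps)
  have cross: "w ** cadj v + v ** cadj w
      = (s ** cadj v + v ** cadj s) + (K ** ?P + ?P ** cadj K) + (mat a ** ?P + ?P ** mat (cnj a))"
    by (simp add: w cadj_add cadj_matrix_mul cadj_mat matrix_add_rdistrib matrix_add_ldistrib
        matrix_mul_assoc algebra_simps)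
  show ?thesis
    unfolding expand cross mat_mult_add_mult_mat_cnj by (simp add: algebra_simps)
qed

lemma res_true_eq:
  "res_true A B al v k = adi_w B al v k ** cadj (adi_w B al v k)
     - (\<Sum>i=1..k. gsq (al i) *\<^sub>R (adi_s A B al v i ** cadj (v i) + v i ** cadj (adi_s A B al v i)))"
proof (induction k)
  case 0
  then show ?case by (simp add: res_true_def adi_ZZ_def)
next
  case (Suc k)
  let ?K = "cmat A" and ?g = "gsq (al (Suc k))" and ?v = "v (Suc k)"
  have "res_true A B al v (Suc k)
      = res_true A B al v k + ?g *\<^sub>R (?K ** (?v ** cadj ?v) + (?v ** cadj ?v) ** cadj ?K)"
    by (simp add: res_true_def adi_ZZ_def matrix_add_ldistrib matrix_add_rdistrib
        scalar_matrix_assoc[symmetric] matrix_scalar_ac algebra_simps)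
  moreover have "adi_w B al v k = adi_s A B al v (Suc k) + (?K + mat (al (Suc k))) ** ?v"
    by (simp add: adi_s_def)
  then have "adi_w B al v (Suc k) ** cadj (adi_w B al v (Suc k))
      = adi_w B al v k ** cadj (adi_w B al v k)
        + ?g *\<^sub>R (adi_s A B al v (Suc k) ** cadj ?v + ?v ** cadj (adi_s A B al v (Suc k)))
        + ?g *\<^sub>R (?K ** (?v ** cadj ?v) + (?v ** cadj ?v) ** cadj ?K)"
    by (simp only: adi_w.simps outer_product_step)
  ultimately show ?case
    unfolding Suc.IH by (simp add: algebra_simps)
qed

lemma cayley_eq:
  assumes "invertible (cmat A + mat a)"
  shows "cayley A a = mat 1 + gsq a *\<^sub>R matrix_inv (cmat A + mat a)"
proof -
  have shift: "cmat A - mat (cnj a) = (cmat A + mat a) + gsq a *\<^sub>R mat 1"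
    by (simp add: vec_eq_iff mat_def gsq_def) (simp add: complex_eq_iff)
  show ?thesis
    unfolding cayley_def shift matrix_add_ldistrib[of "matrix_inv (cmat A + mat a)" "cmat A + mat a"]
    by (simp add: matrix_scalar_ac matrix_inv_mul[OF assms])
qed

lemma gsq_mult_spnorm_matrix_inv_le:
  fixes A :: "real^'n^'n"
  assumes "invertible (cmat A + mat a)" and "spnorm (cayley A a) \<le> 1" and "Re a \<le> 0"
  shows "gsq a * spnorm (matrix_inv (cmat A + mat a)) \<le> 2"
proof -
  have "gsq a * spnorm (matrix_inv (cmat A + mat a)) = spnorm (cayley A a - mat 1)"
    using assms(3) by (simp add: cayley_eq[OF assms(1)] spnorm_scaleR gsq_def)
  also have "\<dots> \<le> 2"
    using spnorm_diff_le[of "cayley A a" "mat 1"] spnorm_mat_1_le[where 'n='n] assms(2) by linarith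
  finally show ?thesis .
qed

lemma adi_v_eq:
  assumes "invertible (cmat A + mat (al (Suc j)))"
  shows "v (Suc j)
    = matrix_inv (cmat A + mat (al (Suc j))) ** (adi_w B al v j - adi_s A B al v (Suc j))"
  by (simp add: adi_s_def matrix_mul_assoc matrix_inv_mul[OF assms])

lemma adi_w_Suc_eq_cayley:
  assumes "invertible (cmat A + mat (al (Suc j)))"
  shows "adi_w B al v (Suc j) = cayley A (al (Suc j)) ** adi_w B al v j
    - gsq (al (Suc j)) *\<^sub>R (matrix_inv (cmat A + mat (al (Suc j))) ** adi_s A B al v (Suc j))"
  unfolding adi_w.simps adi_v_eq[where al=al and j=j and v=v and B=B, OF assms]
  by (simp add: cayley_eq[OF assms] matrix_add_rdistrib matrix_diff_ldistrib
      scalar_matrix_assoc[symmetric] algebra_simps)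

lemma spnorm_adi_v_le:
  assumes "invertible (cmat A + mat (al (Suc j)))"
  shows "spnorm (v (Suc j)) \<le> spnorm (matrix_inv (cmat A + mat (al (Suc j))))
    * (spnorm (adi_w B al v j) + spnorm (adi_s A B al v (Suc j)))"
  unfolding adi_v_eq[where al=al and j=j and v=v and B=B, OF assms]
  by (rule order_trans[OF spnorm_mult_le]) (simp add: mult_left_mono spnorm_diff_le spnorm_nonneg)

definition adi_step_err ::
    "real^'n^'n \<Rightarrow> real^'r^'n \<Rightarrow> (nat \<Rightarrow> complex) \<Rightarrow> (nat \<Rightarrow> complex^'r^'n) \<Rightarrow> nat \<Rightarrow> real" where
  "adi_step_err A B al v k = 2 * gsq (al k) * spnorm (matrix_inv (cmat A + mat (al k)))
     * spnorm (adi_s A B al v k) * (spnorm (adi_w B al v (k - 1)) + spnorm (adi_s A B al v k))"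

lemma adi_step_err_le:
  assumes "Re (al k) \<le> 0" and "0 \<le> e" and "0 \<le> J"
    and "spnorm (adi_s A B al v k)
      \<le> (sqrt ((spnorm (adi_w B al v (k - 1)))\<^sup>2
              + 2 * e / (spnorm (matrix_inv (cmat A + mat (al k))) * gsq (al k) * J))
         - spnorm (adi_w B al v (k - 1))) / 2"
  shows "adi_step_err A B al v k \<le> e / J"
proof -
  define g where "g = gsq (al k)"
  define \<sigma> where "\<sigma> = spnorm (matrix_inv (cmat A + mat (al k)))"
  have g\<sigma>: "0 \<le> \<sigma> * g"
    using mult_nonpos_nonneg[OF assms(1) spnorm_nonneg] by (simp add: g_def \<sigma>_def gsq_def)
  have quad: "4 * spnorm (adi_s A B al v k) * (spnorm (adi_w B al v (k - 1)) + spnorm (adi_s A B al v k))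
      \<le> 2 * e / (\<sigma> * g * J)"
    using assms g\<sigma> unfolding g_def \<sigma>_def
    by (intro mult_add_le_of_le_half_sqrt_gap) (auto simp: spnorm_nonneg)
  show ?thesis
  proof (cases "\<sigma> * g = 0")
    case True
    then show ?thesis
      using assms by (auto simp: adi_step_err_def g_def \<sigma>_def)
  next
    case False
    have "adi_step_err A B al v k = \<sigma> * g / 2 * (4 * spnorm (adi_s A B al v k)
        * (spnorm (adi_w B al v (k - 1)) + spnorm (adi_s A B al v k)))"
      by (simp add: adi_step_err_def g_def \<sigma>_def)
    also have "\<dots> \<le> \<sigma> * g / 2 * (2 * e / (\<sigma> * g * J))"
      using quad g\<sigma> by (intro mult_left_mono) auto
    also have "\<dots> = e / J"
      using False by (simp add: field_simps)
    finally show ?thesis .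
  qed
qed

lemma spnorm_res_true_le:
  assumes "\<And>k. 1 \<le> k \<Longrightarrow> k \<le> m \<Longrightarrow> Re (al k) \<le> 0"
    and "\<And>k. 1 \<le> k \<Longrightarrow> k \<le> m \<Longrightarrow> invertible (cmat A + mat (al k))"
  shows "spnorm (res_true A B al v m)
    \<le> (spnorm (adi_w B al v m))\<^sup>2 + (\<Sum>k=1..m. adi_step_err A B al v k)"
proof -
  let ?s = "adi_s A B al v"
  have "spnorm (gsq (al k) *\<^sub>R (?s k ** cadj (v k) + v k ** cadj (?s k))) \<le> adi_step_err A B al v k"
    if k: "k \<in> {1..m}" for k
  proof -
    obtain j where j: "k = Suc j"
      using k by (cases k) auto
    let ?g = "gsq (al k)" and ?t = "spnorm (?s k)"
      and ?\<sigma> = "spnorm (matrix_inv (cmat A + mat (al k)))"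
    have g: "0 \<le> ?g"
      using assms(1) k by (simp add: gsq_def)
    have "spnorm (?s k ** cadj (v k) + v k ** cadj (?s k))
        \<le> spnorm (?s k ** cadj (v k)) + spnorm (v k ** cadj (?s k))"
      by (rule spnorm_add_le)
    also have "\<dots> \<le> ?t * spnorm (v k) + spnorm (v k) * ?t"
      using spnorm_mult_le[of "?s k" "cadj (v k)"] spnorm_mult_le[of "v k" "cadj (?s k)"]
      by (intro add_mono) simp_all
    also have "\<dots> = 2 * ?t * spnorm (v k)"
      by simp
    also have "\<dots> \<le> 2 * ?t * (?\<sigma> * (spnorm (adi_w B al v (k - 1)) + ?t))"
      using spnorm_adi_v_le[of A al j v B] assms(2) k j
      by (intro mult_left_mono) (auto simp: spnorm_nonneg)
    finally have "?g * spnorm (?s k ** cadj (v k) + v k ** cadj (?s k))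
        \<le> ?g * (2 * ?t * (?\<sigma> * (spnorm (adi_w B al v (k - 1)) + ?t)))"
      using g by (rule mult_left_mono)
    then show ?thesis
      using g by (simp add: spnorm_scaleR adi_step_err_def mult_ac)
  qed
  then have "spnorm (\<Sum>k=1..m. gsq (al k) *\<^sub>R (?s k ** cadj (v k) + v k ** cadj (?s k)))
      \<le> (\<Sum>k=1..m. adi_step_err A B al v k)"
    by (intro order_trans[OF spnorm_sum_le] sum_mono) auto
  then show ?thesis
    unfolding res_true_eq
    by (intro order_trans[OF spnorm_diff_le] add_mono) (simp_all add: spnorm_mult_cadj)
qed

lemma spnorm_adi_w_sq_le:
  fixes A :: "real^'n^'n"
  assumes "\<And>k. 1 \<le> k \<Longrightarrow> k \<le> m \<Longrightarrow> Re (al k) \<le> 0"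
    and "\<And>k. 1 \<le> k \<Longrightarrow> k \<le> m \<Longrightarrow> invertible (cmat A + mat (al k))"
    and "\<And>k. 1 \<le> k \<Longrightarrow> k \<le> m \<Longrightarrow> spnorm (cayley A (al k)) \<le> 1"
  shows "(spnorm (adi_w B al v m))\<^sup>2
    \<le> (spnorm (w_exact A B al m))\<^sup>2 + (\<Sum>k=1..m. adi_step_err A B al v k)"
proof -
  define d where "d k = - (gsq (al k) *\<^sub>R (matrix_inv (cmat A + mat (al k)) ** adi_s A B al v k))"
    for k
  have "(spnorm (mat 1 ** adi_w B al v m))\<^sup>2
      \<le> (spnorm (mat 1 ** w_exact A B al m))\<^sup>2 + (\<Sum>k=1..m. adi_step_err A B al v k)"
  proof (rule perturbed_contraction_product_sq_le[where C = "\<lambda>k. cayley A (al k)" and d = d])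
    fix k
    assume k: "k < m"
    then show "adi_w B al v (Suc k) = cayley A (al (Suc k)) ** adi_w B al v k + d (Suc k)"
      using adi_w_Suc_eq_cayley[of A al k B v] assms(2) by (simp add: d_def)
    show "spnorm (cayley A (al (Suc k))) \<le> 1"
      using assms(3) k by simp
    let ?g = "gsq (al (Suc k))" and ?t = "spnorm (adi_s A B al v (Suc k))"
      and ?\<sigma> = "spnorm (matrix_inv (cmat A + mat (al (Suc k))))"
      and ?W = "spnorm (adi_w B al v k)" and ?e = "spnorm (d (Suc k))"
    have g: "0 \<le> ?g"
      using assms(1) k by (simp add: gsq_def)
    have e_le: "?e \<le> ?g * ?\<sigma> * ?t"
      using mult_left_mono[OF spnorm_mult_le g] g
      by (simp add: d_def spnorm_scaleR mult.assoc)
    have g\<sigma>: "?g * ?\<sigma> \<le> 2"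
      using assms k by (intro gsq_mult_spnorm_matrix_inv_le) auto
    have "?e \<le> 2 * ?t"
      using e_le mult_right_mono[OF g\<sigma> spnorm_nonneg[of "adi_s A B al v (Suc k)"]] by linarith
    then have "?e * (2 * ?W + ?e) \<le> ?e * (2 * ?W + 2 * ?t)"
      by (simp add: mult_left_mono spnorm_nonneg)
    also have "\<dots> \<le> ?g * ?\<sigma> * ?t * (2 * ?W + 2 * ?t)"
      using e_le by (intro mult_right_mono) (auto simp: spnorm_nonneg)
    finally show "?e * (2 * ?W + ?e) \<le> adi_step_err A B al v (Suc k)"
      by (simp add: adi_step_err_def algebra_simps)
  qed (simp_all add: spnorm_mat_1_le)
  then show ?thesis
    by simp
qed

theorem corollary3p8:
  fixes A :: "real^'n^'n" and B :: "real^'r^'n"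
    and al :: "nat \<Rightarrow> complex" and v :: "nat \<Rightarrow> complex^'r^'n"
    and jmax :: nat and eps :: real
  assumes "jmax \<ge> 1" and "0 < eps" and "eps < 1"
    and "\<And>j. 1 \<le> j \<Longrightarrow> j \<le> jmax \<Longrightarrow> Re (al j) < 0"
    and "\<And>j. 1 \<le> j \<Longrightarrow> j \<le> jmax \<Longrightarrow> invertible (cmat A + mat (al j))"
    and "\<And>j. 1 \<le> j \<Longrightarrow> j \<le> jmax \<Longrightarrow> spnorm (cayley A (al j)) < 1"
    and "\<And>k. 1 \<le> k \<Longrightarrow> k \<le> jmax \<Longrightarrow>
           spnorm (adi_s A B al v k) \<le>
             (sqrt ((spnorm (adi_w B al v (k - 1)))\<^sup>2
                    + 2 * eps / (spnorm (matrix_inv (cmat A + mat (al k))) * gsq (al k) * real jmax))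
              - spnorm (adi_w B al v (k - 1))) / 2"
  shows "spnorm (res_true A B al v jmax) \<le> spnorm (res_exact A B al jmax) + 2 * eps"
proof -
  let ?err = "\<Sum>k=1..jmax. adi_step_err A B al v k"
  have shifts: "\<And>k. 1 \<le> k \<Longrightarrow> k \<le> jmax \<Longrightarrow> Re (al k) \<le> 0"
    using assms(4) by (simp add: less_imp_le)
  have "?err \<le> (\<Sum>k=1..jmax. eps / jmax)"
    using shifts assms(2,7) by (intro sum_mono adi_step_err_le) auto
  also have "\<dots> = eps"
    using assms(1) by simp
  finally have err: "?err \<le> eps" .
  have "spnorm (res_true A B al v jmax) \<le> (spnorm (adi_w B al v jmax))\<^sup>2 + ?err"
    using shifts assms(5) by (rule spnorm_res_true_le)
  also have "(spnorm (adi_w B al v jmax))\<^sup>2 \<le> (spnorm (w_exact A B al jmax))\<^sup>2 + ?err"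
    using shifts assms(5,6) by (intro spnorm_adi_w_sq_le) (auto simp: less_imp_le)
  finally show ?thesis
    using err by (simp add: res_exact_def spnorm_mult_cadj)
qed

end
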